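(* Let $q\in(0,1)$, $\beta<1$ real, $n\in\mathbb{N}_0$, $z\in\mathbb{C}\setminus\{0\}$, and let $\tau\neq0$ satisfy $q(\tau+\tau^{-1})=\beta(z+z^{-1})$. Then \[ p_n^{(q,\beta)}(z+z^{-1};q)=\frac{(q;q)_n}{(\beta;q)_n}\sum_{k=0}^{n}\frac{(q\tau z^{-1};q)_k(q\tau^{-1}z;q)_{n-k}}{(q;q)_k(q;q)_{n-k}}z^{2k-n}, \] and (whenever the terms below are defined) \[ p_n^{(q,\beta)}(z+z^{-1};q)=\frac{(q\tau^{-1}z;q)_n}{z^n(\beta;q)_n}\,{}_2\phi_1\!\left(q^{-n},q\tau z^{-1};q^{-n}\tau z^{-1};q,\tau z\right)=\frac{(q^2;q)_n}{q^n\tau^n(\beta;q)_n}\,{}_3\phi_2\!\left(q^{-n},q\tau z^{-1},q\tau z;q^2,0;q,q\right). \]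
   Context: $(a;q)_n:=\prod_{j=0}^{n-1}(1-aq^j)$. The monic polynomials $p_n^{(\alpha,\beta)}(x;q)$ satisfy $p_{-1}=0$, $p_0=1$, $p_{n+1}(x)=xp_n(x)-\tilde\gamma_{n-1}\tilde\gamma_np_{n-1}(x)$ with $\tilde\gamma_n=(1-\alpha q^n)/(1-\beta q^n)$; here $\alpha=q$. ${}_2\phi_1(a,b;c;q,w)=\sum_{k\ge0}\frac{(a,b;q)_k}{(c,q;q)_k}w^k$ and ${}_3\phi_2(a_1,a_2,a_3;b_1,b_2;q,w)=\sum_{k\ge0}\frac{(a_1,a_2,a_3;q)_k}{(b_1,b_2,q;q)_k}w^k$ (both terminating here because of the parameter $q^{-n}$). *)

theory Defs
  imports Complex_Main
begin

definition qpoch :: "complex \<Rightarrow> complex \<Rightarrow> nat \<Rightarrow> complex" where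
  "qpoch a q n = (\<Prod>j<n. 1 - a * q ^ j)"

definition gam :: "real \<Rightarrow> real \<Rightarrow> real \<Rightarrow> nat \<Rightarrow> complex" where
  "gam \<alpha> \<beta> q n = complex_of_real ((1 - \<alpha> * q ^ n) / (1 - \<beta> * q ^ n))"

text \<open>Monic polynomials p_n^{(alpha,beta)}(x;q):
  p_0 = 1, p_1 = x (since p_{-1} = 0), p_{n+2} = x p_{n+1} - gam_n gam_{n+1} p_n.\<close>
fun pab :: "real \<Rightarrow> real \<Rightarrow> real \<Rightarrow> nat \<Rightarrow> complex \<Rightarrow> complex" where
  "pab \<alpha> \<beta> q 0 x = 1"
| "pab \<alpha> \<beta> q (Suc 0) x = x"
| "pab \<alpha> \<beta> q (Suc (Suc n)) x =
     x * pab \<alpha> \<beta> q (Suc n) x - gam \<alpha> \<beta> q n * gam \<alpha> \<beta> q (Suc n) * pab \<alpha> \<beta> q n x"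

text \<open>Basic hypergeometric series (as series; terminating in our use).\<close>
definition phi21 :: "complex \<Rightarrow> complex \<Rightarrow> complex \<Rightarrow> complex \<Rightarrow> complex \<Rightarrow> complex" where
  "phi21 a b c q w = (\<Sum>k. qpoch a q k * qpoch b q k / (qpoch c q k * qpoch q q k) * w ^ k)"

definition phi32 :: "complex \<Rightarrow> complex \<Rightarrow> complex \<Rightarrow> complex \<Rightarrow> complex \<Rightarrow> complex \<Rightarrow> complex \<Rightarrow> complex" where
  "phi32 a1 a2 a3 b1 b2 q w = (\<Sum>k. qpoch a1 q k * qpoch a2 q k * qpoch a3 q k
       / (qpoch b1 q k * qpoch b2 q k * qpoch q q k) * w ^ k)"

end

theory Submission
  imports Defs "HOL-Computational_Algebra.Formal_Power_Series"
begin

text \<open>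
  Write \<open>x = z + 1/z\<close>, \<open>a = q\<tau>/z\<close> and \<open>b = qz/\<tau>\<close>; the hypothesis says
  \<open>ab = q\<^sup>2\<close> and \<open>az + b/z = \<beta>x\<close>.

  The convolution sum is the coefficient of \<open>t\<^sup>n\<close> in \<open>F\<^sub>a(zt) F\<^sub>b(t/z)\<close>, where the
  q-binomial series \<open>F\<^sub>a(t) = \<Sum> (a;q)\<^sub>k/(q;q)\<^sub>k t\<^sup>k\<close> satisfies
  \<open>F\<^sub>a(t)(1 - t) = F\<^sub>a(qt)(1 - at)\<close>. Comparing coefficients in the resulting functional
  equation of the product gives a three-term recurrence which, after normalisation by
  \<open>(q;q)\<^sub>n/(\<beta>;q)\<^sub>n\<close>, is the one defining \<open>p\<^sub>n\<close>.

  The \<open>\<^sub>2\<phi>\<^sub>1\<close> is the same sum, rewritten termwise by reversing the order of the factors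
  of \<open>(cq;q)\<^sub>n/(cq;q)\<^sub>n\<^sub>-\<^sub>k\<close>.

  The \<open>\<^sub>3\<phi>\<^sub>2\<close> is the Al-Salam-Chihara polynomial with parameters \<open>q\<tau>\<close> and \<open>q/\<tau>\<close>.
  Two contiguous relations between the coefficients of the terminating series turn its
  three-term recurrence into a telescoping sum, and once more that recurrence is the one
  of \<open>p\<^sub>n\<close>.
\<close>

section \<open>q-shifted factorials\<close>

lemma qpoch_0 [simp]: "qpoch a q 0 = 1"
  by (simp add: qpoch_def)

lemma qpoch_Suc: "qpoch a q (Suc n) = qpoch a q n * (1 - a * q ^ n)"
  by (simp add: qpoch_def)

lemma qpoch_Suc_shift: "qpoch a q (Suc n) = (1 - a) * qpoch (a * q) q n"
  by (induction n) (simp_all add: qpoch_Suc ac_simps)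

lemma qpoch_add: "qpoch a q (m + k) = qpoch a q m * (\<Prod>i<k. 1 - a * q ^ (m + i))"
  by (induction k) (simp_all add: qpoch_Suc)

lemma qpoch_zero_left [simp]: "qpoch 0 q n = 1"
  by (simp add: qpoch_def)

lemma qpoch_inverse_power_eq_0:
  assumes "q \<noteq> 0" "n < k"
  shows "qpoch (inverse (q ^ n)) q k = 0"
  unfolding qpoch_def using assms by (intro prod_zero) (auto intro!: bexI[of _ n])

lemma qpoch_of_real_nonzero:
  fixes a q :: real
  assumes "0 < q" "q < 1" "a < 1"
  shows "qpoch (of_real a) (of_real q) n \<noteq> 0"
proof -
  have "0 < 1 - a * q ^ j" for j
  proof -
    have "q ^ j \<le> 1" using assms by (simp add: power_le_one)
    then have "a * q ^ j \<le> max a 0"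
      using assms by (cases "a \<ge> 0") (auto intro: mult_left_le mult_nonpos_nonneg)
    then show ?thesis using assms by linarith
  qed
  then have "0 < (\<Prod>j<n. 1 - a * q ^ j)" by (simp add: prod_pos)
  moreover have "qpoch (of_real a) (of_real q) n = of_real (\<Prod>j<n. 1 - a * q ^ j)"
    by (simp add: qpoch_def)
  ultimately show ?thesis by (metis less_irrefl of_real_eq_0_iff)
qed

lemma qpoch_reverse:
  fixes c q :: complex
  assumes "k \<le> n" "c \<noteq> 0" "q \<noteq> 0"
  shows "qpoch (c * q) q n
       = (- c) ^ k * (\<Prod>j<k. q ^ (n - j)) * qpoch (c * q) q (n - k)
         * qpoch (inverse (c * q ^ n)) q k"
proof -
  have "qpoch (c * q) q n = qpoch (c * q) q (n - k) * (\<Prod>i<k. 1 - c * q * q ^ (n - k + i))"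
    using qpoch_add[of "c * q" q "n - k" k] assms(1) by simp
  also have "(\<Prod>i<k. 1 - c * q * q ^ (n - k + i))
      = (\<Prod>j<k. 1 - c * q * q ^ (n - k + (k - Suc j)))"
    by (rule prod.nat_diff_reindex[symmetric])
  also have "\<dots> = (\<Prod>j<k. (- c) * q ^ (n - j) * (1 - inverse (c * q ^ n) * q ^ j))"
  proof (rule prod.cong[OF refl])
    fix j assume "j \<in> {..<k}"
    then have "n - k + (k - Suc j) = n - Suc j" "Suc (n - Suc j) = n - j" "n - j + j = n"
      using assms(1) by auto
    then have "q * q ^ (n - k + (k - Suc j)) = q ^ (n - j)" "q ^ n = q ^ (n - j) * q ^ j"
      by (metis power_Suc, metis power_add)
    then show "1 - c * q * q ^ (n - k + (k - Suc j))
        = (- c) * q ^ (n - j) * (1 - inverse (c * q ^ n) * q ^ j)"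
      using assms(2,3) by (simp add: field_simps)
  qed
  also have "\<dots> = (- c) ^ k * (\<Prod>j<k. q ^ (n - j)) * qpoch (inverse (c * q ^ n)) q k"
    by (simp only: prod.distrib prod_constant card_lessThan qpoch_def)
  finally show ?thesis by (simp add: ac_simps)
qed

section \<open>Rescaled solutions of the recurrence of \<open>p\<^sub>n\<close>\<close>

lemma pab_eq_of_weighted_recurrence:
  fixes \<alpha> \<beta> q :: real and A B Q x :: complex and w F :: "nat \<Rightarrow> complex"
  assumes A: "A = of_real \<alpha>" and B: "B = of_real \<beta>" and Q: "Q = of_real q"
    and B_nz: "\<And>n. qpoch B Q n \<noteq> 0"
    and F0: "F 0 = 1" and F1: "w 0 * F 1 = (1 - B) * x"
    and rec: "\<And>n. w n * w (Suc n) * F (Suc (Suc n))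
      = (1 - B * Q ^ Suc n) * x * w n * F (Suc n) - (1 - A * Q ^ n) * (1 - A * Q ^ Suc n) * F n"
  shows "pab \<alpha> \<beta> q n x = (\<Prod>i<n. w i) / qpoch B Q n * F n"
proof (induction n rule: induct_nat_012)
  case 0
  then show ?case using F0 by simp
next
  case 1
  have "1 - B \<noteq> 0" using B_nz[of 1] by (simp add: qpoch_def)
  then show ?case using F1 by (simp add: qpoch_def field_simps)
next
  case (ge2 n)
  define W where "W m = (\<Prod>i<m. w i)" for m
  define P where "P m = qpoch B Q m" for m
  define b where "b m = 1 - B * Q ^ m" for m
  define c where "c m = 1 - A * Q ^ m" for m
  have P0: "P m \<noteq> 0" and b0: "b m \<noteq> 0" for m
    using B_nz[of m] B_nz[of "Suc m"] by (simp_all add: P_def b_def qpoch_Suc)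
  have gam: "gam \<alpha> \<beta> q m = c m / b m" for m
    by (simp add: gam_def A B Q b_def c_def)
  have W: "W (Suc m) = W m * w m" and P: "P (Suc m) = P m * b m" for m
    by (simp_all add: W_def P_def b_def qpoch_Suc)
  have "pab \<alpha> \<beta> q (Suc (Suc n)) x
      = x * (W (Suc n) / P (Suc n) * F (Suc n))
        - c n / b n * (c (Suc n) / b (Suc n)) * (W n / P n * F n)"
    using ge2 by (simp add: gam W_def P_def)
  also have "\<dots> = W n / (P n * b n * b (Suc n))
      * (b (Suc n) * x * w n * F (Suc n) - c n * c (Suc n) * F n)"
    using P0[of n] b0[of n] b0[of "Suc n"] by (simp add: W P field_simps)
  also have "\<dots> = W n / (P n * b n * b (Suc n)) * (w n * w (Suc n) * F (Suc (Suc n)))"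
    unfolding rec b_def c_def ..
  also have "\<dots> = W (Suc (Suc n)) / P (Suc (Suc n)) * F (Suc (Suc n))"
    by (simp add: W P)
  finally show ?case by (simp add: W_def P_def)
qed

section \<open>The q-binomial convolution\<close>

lemma fps_nth_mult_linear_factor:
  fixes F :: "'a::comm_ring_1 fps"
  shows "fps_nth (F * (1 - fps_const c * fps_X)) n
       = fps_nth F n - (if n = 0 then 0 else c * fps_nth F (n - 1))"
proof -
  have "F * (1 - fps_const c * fps_X) = F - fps_const c * (fps_X * F)"
    by (simp add: algebra_simps)
  then show ?thesis by simp
qed

lemma fps_nth_mult_linear_factors:
  fixes F :: "'a::comm_ring_1 fps"
  shows "fps_nth (F * (1 - fps_const c * fps_X) * (1 - fps_const d * fps_X)) (Suc (Suc n))
       = fps_nth F (Suc (Suc n)) - (c + d) * fps_nth F (Suc n) + c * d * fps_nth F n"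
  by (simp only: fps_nth_mult_linear_factor) (simp add: algebra_simps)

definition qbinomial_fps :: "complex \<Rightarrow> complex \<Rightarrow> complex \<Rightarrow> complex fps" where
  "qbinomial_fps a q z = Abs_fps (\<lambda>k. qpoch a q k / qpoch q q k * z ^ k)"

lemma qbinomial_fps_functional_eq:
  assumes "\<And>m. qpoch q q m \<noteq> 0"
  shows "qbinomial_fps a q z * (1 - fps_const z * fps_X)
       = (qbinomial_fps a q z oo (fps_const q * fps_X)) * (1 - fps_const (a * z) * fps_X)"
proof (rule fps_ext)
  fix n
  show "fps_nth (qbinomial_fps a q z * (1 - fps_const z * fps_X)) n
      = fps_nth ((qbinomial_fps a q z oo (fps_const q * fps_X)) * (1 - fps_const (a * z) * fps_X)) n"
  proof (cases n)
    case 0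
    then show ?thesis by (simp add: fps_nth_mult_linear_factor qbinomial_fps_def)
  next
    case (Suc m)
    have "qpoch q q m * (1 - q * q ^ m) \<noteq> 0"
      using assms[of "Suc m"] by (simp add: qpoch_Suc)
    then show ?thesis
      unfolding Suc fps_nth_mult_linear_factor fps_nth_compose_linear qbinomial_fps_def
        fps_nth_Abs_fps
      by (simp add: qpoch_Suc field_simps)
  qed
qed

definition qbinomial_convolution ::
    "complex \<Rightarrow> complex \<Rightarrow> complex \<Rightarrow> complex \<Rightarrow> nat \<Rightarrow> complex" where
  "qbinomial_convolution a b q z n = (\<Sum>k\<le>n. qpoch a q k * qpoch b q (n - k)
     / (qpoch q q k * qpoch q q (n - k)) * z powi (2 * int k - int n))"

lemma power_int_double_diff:
  fixes z :: "'a::field"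
  assumes "z \<noteq> 0" "k \<le> n"
  shows "z powi (2 * int k - int n) = z ^ k * inverse z ^ (n - k)"
proof -
  have "z powi (2 * int k - int n) = z powi (int k - int (n - k))"
    using assms(2) by (simp add: of_nat_diff)
  also have "\<dots> = z powi int k / z powi int (n - k)"
    using assms(1) by (rule power_int_diff[OF disjI1])
  finally show ?thesis by (simp add: divide_inverse power_inverse)
qed

lemma fps_nth_qbinomial_fps_mult:
  assumes "z \<noteq> 0"
  shows "fps_nth (qbinomial_fps a q z * qbinomial_fps b q (inverse z)) n
       = qbinomial_convolution a b q z n"
  unfolding qbinomial_convolution_def qbinomial_fps_def fps_mult_nth atMost_atLeast0
    fps_nth_Abs_fps
  by (intro sum.cong refl) (simp add: power_int_double_diff[OF assms])

lemma qbinomial_convolution_rec: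
  fixes a b q z :: complex
  assumes "\<And>m. qpoch q q m \<noteq> 0" "z \<noteq> 0"
  defines "f \<equiv> qbinomial_convolution a b q z"
  shows "f (Suc (Suc n)) - (z + inverse z) * f (Suc n) + f n
       = q ^ Suc (Suc n) * f (Suc (Suc n)) - (a * z + b * inverse z) * (q ^ Suc n * f (Suc n))
         + a * b * (q ^ n * f n)"
proof -
  define A where "A = qbinomial_fps a q z"
  define B where "B = qbinomial_fps b q (inverse z)"
  define L where "L c = 1 - fps_const c * fps_X" for c :: complex
  define dilate where "dilate F = F oo (fps_const q * fps_X)" for F :: "complex fps"
  have "A * B * L z * L (inverse z) = (A * L z) * (B * L (inverse z))"
    by (simp only: ac_simps)
  also have "\<dots> = (dilate A * L (a * z)) * (dilate B * L (b * inverse z))"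
    unfolding A_def B_def L_def dilate_def by (simp only: qbinomial_fps_functional_eq[OF assms(1)])
  also have "\<dots> = dilate (A * B) * L (a * z) * L (b * inverse z)"
    unfolding dilate_def by (simp add: fps_compose_mult_distrib ac_simps)
  finally have "fps_nth (A * B * L z * L (inverse z)) (Suc (Suc n))
      = fps_nth (dilate (A * B) * L (a * z) * L (b * inverse z)) (Suc (Suc n))"
    by (rule arg_cong)
  then show ?thesis
    using assms(2)
    unfolding L_def fps_nth_mult_linear_factors dilate_def fps_nth_compose_linear A_def B_def
      fps_nth_qbinomial_fps_mult[OF assms(2)] f_def
    by (simp add: field_simps)
qed

lemma pab_eq_qbinomial_convolution:
  fixes q \<beta> :: real and z \<tau> :: complex
  assumes q: "0 < q" "q < 1" and \<beta>: "\<beta> < 1" and z: "z \<noteq> 0" and \<tau>: "\<tau> \<noteq> 0"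
    and \<tau>z: "of_real q * (\<tau> + inverse \<tau>) = of_real \<beta> * (z + inverse z)"
  shows "pab q \<beta> q n (z + inverse z)
       = qpoch (of_real q) (of_real q) n / qpoch (of_real \<beta>) (of_real q) n
         * qbinomial_convolution (of_real q * \<tau> / z) (of_real q * z / \<tau>) (of_real q) z n"
proof -
  define Q :: complex where "Q = of_real q"
  define B :: complex where "B = of_real \<beta>"
  define x where "x = z + inverse z"
  define a where "a = Q * \<tau> / z"
  define b where "b = Q * z / \<tau>"
  define f where "f = qbinomial_convolution a b Q z"
  have Q_nz: "qpoch Q Q m \<noteq> 0" for m
    unfolding Q_def by (rule qpoch_of_real_nonzero[OF q q(2)])
  have ab: "a * b = Q ^ 2"
    using z \<tau> by (simp add: a_def b_def power2_eq_square)
  have s: "a * z + b * inverse z = B * x"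
    using \<tau>z z \<tau> unfolding a_def b_def Q_def B_def x_def by (simp add: field_simps)
  have "pab q \<beta> q n x = (\<Prod>i<n. 1 - Q * Q ^ i) / qpoch B Q n * f n"
  proof (rule pab_eq_of_weighted_recurrence[OF Q_def B_def Q_def])
    show "qpoch B Q m \<noteq> 0" for m
      unfolding B_def Q_def by (rule qpoch_of_real_nonzero[OF q \<beta>])
    show "f 0 = 1"
      by (simp add: f_def qbinomial_convolution_def)
    have "1 - Q \<noteq> 0"
      using Q_nz[of 1] by (simp add: qpoch_def)
    moreover have "f 1 = ((1 - b) * inverse z + (1 - a) * z) / (1 - Q)"
      by (simp add: f_def qbinomial_convolution_def qpoch_def power_int_minus add_divide_distrib)
    ultimately have "(1 - Q) * f 1 = (1 - b) * inverse z + (1 - a) * z"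
      by simp
    also have "\<dots> = x - (a * z + b * inverse z)"
      by (simp add: x_def algebra_simps)
    finally have "(1 - Q) * f 1 = x - (a * z + b * inverse z)" .
    then show "(1 - Q * Q ^ 0) * f 1 = (1 - B) * x"
      unfolding s by (simp add: algebra_simps)
  next
    fix m
    have rec: "(1 - Q ^ Suc (Suc m)) * f (Suc (Suc m))
        = (1 - B * Q ^ Suc m) * x * f (Suc m) - (1 - Q ^ Suc (Suc m)) * f m"
      using qbinomial_convolution_rec[OF Q_nz z, of a b m]
      unfolding f_def[symmetric] ab s x_def[symmetric] by (simp add: algebra_simps power2_eq_square)
    show "(1 - Q * Q ^ m) * (1 - Q * Q ^ Suc m) * f (Suc (Suc m))
        = (1 - B * Q ^ Suc m) * x * (1 - Q * Q ^ m) * f (Suc m)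
          - (1 - Q * Q ^ m) * (1 - Q * Q ^ Suc m) * f m"
      using arg_cong[OF rec, of "\<lambda>t. (1 - Q * Q ^ m) * t"] by (simp add: algebra_simps)
  qed
  then show ?thesis
    by (simp add: x_def f_def a_def b_def Q_def B_def qpoch_def)
qed

section \<open>The \<open>\<^sub>2\<phi>\<^sub>1\<close> form\<close>

lemma phi21_terminating:
  fixes q :: complex
  assumes "q \<noteq> 0"
  shows "phi21 (inverse (q ^ n)) b c q w
       = (\<Sum>k\<le>n. qpoch (inverse (q ^ n)) q k * qpoch b q k
           / (qpoch c q k * qpoch q q k) * w ^ k)"
  unfolding phi21_def by (rule suminf_finite) (auto simp: qpoch_inverse_power_eq_0[OF assms])

lemma qbinomial_convolution_term_reverse:
  fixes q z \<tau> A :: complex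
  assumes q: "q \<noteq> 0" and z: "z \<noteq> 0" and \<tau>: "\<tau> \<noteq> 0" and kn: "k \<le> n"
    and nz: "qpoch q q k \<noteq> 0" "qpoch q q (n - k) \<noteq> 0"
      "qpoch (inverse (q ^ n) * \<tau> / z) q k \<noteq> 0"
  shows "qpoch q q n * (A * qpoch (q * z / \<tau>) q (n - k) / (qpoch q q k * qpoch q q (n - k))
           * z powi (2 * int k - int n))
       = qpoch (q * z / \<tau>) q n / z ^ n * (qpoch (inverse (q ^ n)) q k * A
           / (qpoch (inverse (q ^ n) * \<tau> / z) q k * qpoch q q k) * (\<tau> * z) ^ k)"
proof -
  define P where "P = (\<Prod>j<k. q ^ (n - j))"
  have r1: "qpoch q q n = (- 1) ^ k * P * qpoch q q (n - k) * qpoch (inverse (q ^ n)) q k"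
    using qpoch_reverse[OF kn one_neq_zero q] unfolding P_def by simp
  have r2: "qpoch (q * z / \<tau>) q n
      = (- (z / \<tau>)) ^ k * P * qpoch (q * z / \<tau>) q (n - k)
        * qpoch (inverse (q ^ n) * \<tau> / z) q k"
  proof -
    have "z / \<tau> \<noteq> 0" using z \<tau> by simp
    moreover have "z / \<tau> * q = q * z / \<tau>"
      "inverse (z / \<tau> * q ^ n) = inverse (q ^ n) * \<tau> / z"
      by (simp_all add: field_simps)
    ultimately show ?thesis
      using qpoch_reverse[OF kn _ q, of "z / \<tau>"] unfolding P_def by metis
  qed
  have zn: "z ^ n = z ^ k * z ^ (n - k)"
    using kn by (simp flip: power_add)
  show ?thesis
    unfolding r1 r2 power_int_double_diff[OF z kn] zn
    using nz z \<tau>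
    by (simp add: field_simps power_mult_distrib power_divide power_minus[of "z / \<tau>"])
qed

lemma phi21_eq_qbinomial_convolution:
  fixes q z \<tau> :: complex
  assumes q: "q \<noteq> 0" and z: "z \<noteq> 0" and \<tau>: "\<tau> \<noteq> 0"
    and q_nz: "\<And>m. qpoch q q m \<noteq> 0"
    and nz: "\<forall>k\<le>n. qpoch (inverse (q ^ n) * \<tau> / z) q k \<noteq> 0"
  shows "qpoch q q n * qbinomial_convolution (q * \<tau> / z) (q * z / \<tau>) q z n
       = qpoch (q * z / \<tau>) q n / z ^ n
         * phi21 (inverse (q ^ n)) (q * \<tau> / z) (inverse (q ^ n) * \<tau> / z) q (\<tau> * z)"
  unfolding qbinomial_convolution_def phi21_terminating[OF q] sum_distrib_left
  by (intro sum.cong refl qbinomial_convolution_term_reverse) (use assms in auto)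

lemma pab_eq_phi21:
  fixes q \<beta> :: real and z \<tau> :: complex
  assumes q: "0 < q" "q < 1" and \<beta>: "\<beta> < 1" and z: "z \<noteq> 0" and \<tau>: "\<tau> \<noteq> 0"
    and \<tau>z: "of_real q * (\<tau> + inverse \<tau>) = of_real \<beta> * (z + inverse z)"
    and nz: "\<forall>k\<le>n. qpoch (inverse (of_real q ^ n) * \<tau> / z) (of_real q) k \<noteq> 0"
  shows "pab q \<beta> q n (z + inverse z)
       = qpoch (of_real q * z / \<tau>) (of_real q) n / (z ^ n * qpoch (of_real \<beta>) (of_real q) n)
         * phi21 (inverse (of_real q ^ n)) (of_real q * \<tau> / z) (inverse (of_real q ^ n) * \<tau> / z)
             (of_real q) (\<tau> * z)"
proof -
  have "of_real q \<noteq> (0 :: complex)" using q by simp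
  note reversal =
    phi21_eq_qbinomial_convolution[OF this z \<tau> qpoch_of_real_nonzero[OF q q(2)] nz]
  show ?thesis
    unfolding pab_eq_qbinomial_convolution[OF q \<beta> z \<tau> \<tau>z] times_divide_eq_left reversal
    by simp
qed

section \<open>Al-Salam-Chihara polynomials\<close>

definition phi32_coeff :: "complex \<Rightarrow> complex \<Rightarrow> nat \<Rightarrow> nat \<Rightarrow> complex" where
  "phi32_coeff p q n j = qpoch (inverse (q ^ n)) q j * q ^ j / (qpoch p q j * qpoch q q j)"

lemma phi32_coeff_0 [simp]: "phi32_coeff p q n 0 = 1"
  by (simp add: phi32_coeff_def)

lemma phi32_coeff_eq_0:
  assumes "q \<noteq> 0" "n < j"
  shows "phi32_coeff p q n j = 0"
  using assms by (simp add: phi32_coeff_def qpoch_inverse_power_eq_0)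

lemma phi32_terminating:
  fixes q :: complex
  assumes "q \<noteq> 0"
  shows "phi32 (inverse (q ^ n)) a b p 0 q q
       = (\<Sum>j\<le>n. phi32_coeff p q n j * (qpoch a q j * qpoch b q j))"
proof -
  have "phi32 (inverse (q ^ n)) a b p 0 q q
      = (\<Sum>j\<le>n. qpoch (inverse (q ^ n)) q j * qpoch a q j * qpoch b q j
          / (qpoch p q j * qpoch 0 q j * qpoch q q j) * q ^ j)"
    unfolding phi32_def by (rule suminf_finite) (auto simp: qpoch_inverse_power_eq_0[OF assms])
  also have "\<dots> = (\<Sum>j\<le>n. phi32_coeff p q n j * (qpoch a q j * qpoch b q j))"
    by (intro sum.cong refl) (simp add: phi32_coeff_def mult_ac)
  finally show ?thesis .
qed

lemma phi32_coeff_Suc: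
  fixes q :: complex
  assumes "q \<noteq> 0"
  shows "(q ^ j - q ^ Suc n) * phi32_coeff p q (Suc n) j = (1 - q ^ Suc n) * phi32_coeff p q n j"
proof -
  define u where "u = inverse (q ^ Suc n)"
  have "u * q = inverse (q ^ n)"
    using assms by (simp add: u_def)
  then have shift: "qpoch u q j * (1 - u * q ^ j) = (1 - u) * qpoch (inverse (q ^ n)) q j"
    using qpoch_Suc[of u q j] qpoch_Suc_shift[of u q j] by simp
  have "(q ^ j - q ^ Suc n) * qpoch u q j = - (q ^ Suc n) * (qpoch u q j * (1 - u * q ^ j))"
    using assms by (simp add: u_def field_simps)
  also have "\<dots> = - (q ^ Suc n) * ((1 - u) * qpoch (inverse (q ^ n)) q j)"
    by (simp only: shift)
  also have "\<dots> = (1 - q ^ Suc n) * qpoch (inverse (q ^ n)) q j"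
    using assms by (simp add: u_def field_simps)
  finally have key:
    "(q ^ j - q ^ Suc n) * qpoch u q j = (1 - q ^ Suc n) * qpoch (inverse (q ^ n)) q j" .
  show ?thesis
    unfolding phi32_coeff_def u_def[symmetric]
    by (simp only: times_divide_eq_right mult.assoc[symmetric] key)
qed

lemma phi32_coeff_contiguous:
  fixes p q :: complex
  assumes q: "q \<noteq> 0" and nz: "qpoch p q (Suc j) \<noteq> 0" "qpoch q q (Suc j) \<noteq> 0"
  shows "(1 - p * q ^ Suc n) * phi32_coeff p q (Suc (Suc n)) (Suc j)
       = (inverse (q ^ Suc j) - p * q ^ Suc n) * phi32_coeff p q (Suc n) (Suc j)
         - inverse (q ^ j) * phi32_coeff p q (Suc n) j"
proof -
  define u where "u = inverse (q ^ Suc n)"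
  define t where "t = q ^ j"
  define D where "D = qpoch p q j * qpoch q q j"
  have u: "u \<noteq> 0" "inverse (q ^ Suc (Suc n)) = u / q" "p * q ^ Suc n = p / u"
    using q by (simp_all add: u_def field_simps)
  have t: "t \<noteq> 0" using q by (simp add: t_def)
  have D: "D \<noteq> 0" "1 - p * t \<noteq> 0" "1 - q * t \<noteq> 0"
    using nz by (simp_all add: D_def t_def qpoch_Suc)
  define E where "E = qpoch u q j / (D * (1 - p * t) * (1 - q * t))"
  have c2: "phi32_coeff p q (Suc (Suc n)) (Suc j) = ((1 - u / q) * (q * t)) * E"
    unfolding phi32_coeff_def u(2) qpoch_Suc_shift[of "u / q"] E_def using q
    by (simp add: D_def t_def qpoch_Suc ac_simps)
  have c1: "phi32_coeff p q (Suc n) (Suc j) = ((1 - u * t) * (q * t)) * E"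
    unfolding phi32_coeff_def u_def[symmetric] E_def by (simp add: D_def t_def qpoch_Suc ac_simps)
  have c0: "phi32_coeff p q (Suc n) j = (t * (1 - p * t) * (1 - q * t)) * E"
    unfolding phi32_coeff_def u_def[symmetric] E_def using D by (simp add: D_def t_def)
  have poly: "(1 - p / u) * ((1 - u / q) * (q * t))
      = (inverse (q * t) - p / u) * ((1 - u * t) * (q * t))
        - inverse t * (t * (1 - p * t) * (1 - q * t))"
    using q u(1) t by (simp add: field_simps)
  have "(1 - p / u) * (((1 - u / q) * (q * t)) * E)
      = (inverse (q * t) - p / u) * (((1 - u * t) * (q * t)) * E)
        - inverse t * ((t * (1 - p * t) * (1 - q * t)) * E)"
    using arg_cong[OF poly, of "\<lambda>x. x * E"] by (simp add: algebra_simps)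
  then show ?thesis
    unfolding c2 c1 c0 u(3) by (simp add: t_def)
qed

lemma phi32_al_salam_chihara_1:
  fixes a b q z :: complex
  assumes q: "q \<noteq> 0" "q \<noteq> 1" and z: "z \<noteq> 0" and ab: "a * b \<noteq> 1"
  shows "(1 - a * b) * phi32 (inverse q) (a / z) (a * z) (a * b) 0 q q
       = a * (z + inverse z) - a * (a + b)"
proof -
  have "phi32_coeff (a * b) q 1 1 = - 1 * (1 - q) / ((1 - a * b) * (1 - q))"
    using q(1) by (simp add: phi32_coeff_def qpoch_def algebra_simps)
  also have "\<dots> = - 1 / (1 - a * b)"
    using q(2) by (intro nonzero_mult_divide_mult_cancel_right) simp
  finally have "phi32 (inverse q) (a / z) (a * z) (a * b) 0 q q
      = 1 - (1 - a / z) * (1 - a * z) / (1 - a * b)"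
    using phi32_terminating[OF q(1), of 1] by (simp add: qpoch_def)
  then show ?thesis
    using z ab by (simp add: field_simps)
qed

lemma phi32_al_salam_chihara_term:
  fixes a b q z :: complex and n j :: nat
  assumes q: "q \<noteq> 0" and z: "z \<noteq> 0"
    and nz: "\<And>m. qpoch (a * b) q m \<noteq> 0" "\<And>m. qpoch q q m \<noteq> 0"
  defines "c \<equiv> phi32_coeff (a * b) q" and "\<phi> \<equiv> \<lambda>j. qpoch (a / z) q j * qpoch (a * z) q j"
  defines "T \<equiv> \<lambda>j. if j = 0 then 0 else inverse (q ^ (j - 1)) * c (Suc n) (j - 1) * \<phi> j"
  shows "(1 - a * b * q ^ Suc n) * c (Suc (Suc n)) j * \<phi> j
       - (a * (z + inverse z - (a + b) * q ^ Suc n) * c (Suc n) j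
          - a ^ 2 * (1 - q ^ Suc n) * c n j) * \<phi> j
       = T (Suc j) - T j"
proof (cases j)
  case 0
  then show ?thesis
    using z
    by (simp add: T_def c_def phi32_coeff_def \<phi>_def qpoch_def field_simps power2_eq_square)
next
  case (Suc i)
  have I: "(q ^ Suc i - q ^ Suc n) * c (Suc n) (Suc i) = (1 - q ^ Suc n) * c n (Suc i)"
    unfolding c_def by (rule phi32_coeff_Suc[OF q])
  have II: "(1 - a * b * q ^ Suc n) * c (Suc (Suc n)) (Suc i)
      = (inverse (q ^ Suc i) - a * b * q ^ Suc n) * c (Suc n) (Suc i)
        - inverse (q ^ i) * c (Suc n) i"
    unfolding c_def by (rule phi32_coeff_contiguous[OF q nz])
  have \<phi>: "inverse (q ^ Suc i) * \<phi> (Suc (Suc i))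
      = (inverse (q ^ Suc i) - a * (z + inverse z) + a ^ 2 * q ^ Suc i) * \<phi> (Suc i)"
    using q z by (simp add: \<phi>_def qpoch_Suc field_simps power2_eq_square)
  \<comment> \<open>\<open>I\<close> cancels the terms in \<open>a\<^sup>2\<close>; \<open>II\<close> leaves only the telescoping difference.\<close>
  have "P * CN * f - (a * (x - (a + b) * Q) * C1 - a ^ 2 * (1 - Q) * Cn) * f
      = i1 * C1 * f' - i0 * C0 * f"
    if "(t - Q) * C1 = (1 - Q) * Cn" "P * CN = (i1 - a * b * Q) * C1 - i0 * C0"
      "i1 * f' = (i1 - a * x + a ^ 2 * t) * f" "P = 1 - a * b * Q"
    for P CN C1 Cn C0 Q t i1 i0 f f' x :: complex
    using that by algebra
  then show ?thesis
    unfolding Suc T_def using I II \<phi> by simp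
qed

lemma phi32_al_salam_chihara_rec:
  fixes a b q z :: complex
  assumes q: "q \<noteq> 0" and z: "z \<noteq> 0"
    and nz: "\<And>m. qpoch (a * b) q m \<noteq> 0" "\<And>m. qpoch q q m \<noteq> 0"
  defines "R \<equiv> \<lambda>n. phi32 (inverse (q ^ n)) (a / z) (a * z) (a * b) 0 q q"
  shows "(1 - a * b * q ^ Suc n) * R (Suc (Suc n))
       = a * (z + inverse z - (a + b) * q ^ Suc n) * R (Suc n) - a ^ 2 * (1 - q ^ Suc n) * R n"
proof -
  define N where "N = Suc (Suc n)"
  define c where "c = phi32_coeff (a * b) q"
  define \<phi> where "\<phi> j = qpoch (a / z) q j * qpoch (a * z) q j" for j
  define T where
    "T j = (if j = 0 then 0 else inverse (q ^ (j - 1)) * c (Suc n) (j - 1) * \<phi> j)" for j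
  have R: "R m = (\<Sum>j\<le>N. c m j * \<phi> j)" if "m \<le> N" for m
    unfolding R_def phi32_terminating[OF q] c_def \<phi>_def
    by (rule sum.mono_neutral_left) (use that phi32_coeff_eq_0[OF q] in \<open>auto simp: N_def\<close>)
  define L where "L j = (1 - a * b * q ^ Suc n) * c N j * \<phi> j" for j
  define M where "M j = (a * (z + inverse z - (a + b) * q ^ Suc n) * c (Suc n) j
    - a ^ 2 * (1 - q ^ Suc n) * c n j) * \<phi> j" for j
  have telescope: "L j - M j = T (Suc j) - T j" for j
    unfolding L_def M_def c_def \<phi>_def T_def N_def
    by (rule phi32_al_salam_chihara_term[OF q z nz])
  have "(\<Sum>j\<le>N. L j - M j) = T (Suc N) - T 0"
    unfolding telescope atMost_atLeast0 by (rule sum_Suc_diff) simp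
  also have "\<dots> = 0"
    using phi32_coeff_eq_0[OF q, of "Suc n" N] by (simp add: T_def c_def N_def)
  finally have sums_eq: "(\<Sum>j\<le>N. L j) = (\<Sum>j\<le>N. M j)"
    by (simp only: sum_subtractf right_minus_eq)
  have le: "Suc n \<le> N" "n \<le> N"
    by (simp_all add: N_def)
  have "(1 - a * b * q ^ Suc n) * R N = (\<Sum>j\<le>N. L j)"
    using R[of N] by (simp add: L_def sum_distrib_left mult.assoc)
  also note sums_eq
  also have "(\<Sum>j\<le>N. M j)
      = a * (z + inverse z - (a + b) * q ^ Suc n) * R (Suc n) - a ^ 2 * (1 - q ^ Suc n) * R n"
    by (simp add: M_def R[OF le(1)] R[OF le(2)] left_diff_distrib sum_subtractf sum_distrib_left
        mult.assoc)
  finally show ?thesis by (simp add: N_def)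
qed

lemma pab_eq_phi32:
  fixes q \<beta> :: real and z \<tau> :: complex
  assumes q: "0 < q" "q < 1" and \<beta>: "\<beta> < 1" and z: "z \<noteq> 0" and \<tau>: "\<tau> \<noteq> 0"
    and \<tau>z: "of_real q * (\<tau> + inverse \<tau>) = of_real \<beta> * (z + inverse z)"
  shows "pab q \<beta> q n (z + inverse z)
       = qpoch (of_real q ^ 2) (of_real q) n
           / (of_real q ^ n * \<tau> ^ n * qpoch (of_real \<beta>) (of_real q) n)
         * phi32 (inverse (of_real q ^ n)) (of_real q * \<tau> / z) (of_real q * \<tau> * z) (of_real q ^ 2) 0
             (of_real q) (of_real q)"
proof -
  define Q :: complex where "Q = of_real q"
  define B :: complex where "B = of_real \<beta>"
  define x where "x = z + inverse z"
  define a where "a = Q * \<tau>"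
  define b where "b = Q / \<tau>"
  define R where "R m = phi32 (inverse (Q ^ m)) (a / z) (a * z) (a * b) 0 Q Q" for m
  define w where "w i = (1 - a * b * Q ^ i) / a" for i
  have Q: "Q \<noteq> 0" "Q \<noteq> 1" "\<And>m. qpoch Q Q m \<noteq> 0"
    using q qpoch_of_real_nonzero[OF q q(2)] by (simp_all add: Q_def)
  have a: "a \<noteq> 0" using Q \<tau> by (simp add: a_def)
  have ab: "a * b = Q ^ 2"
    using \<tau> by (simp add: a_def b_def power2_eq_square)
  have ab_nz: "qpoch (a * b) Q m \<noteq> 0" for m
    using qpoch_of_real_nonzero[OF q, of "q ^ 2" m] q
    by (simp add: ab Q_def power_less_one_iff)
  then have ab_1: "a * b \<noteq> 1"
    using ab_nz[of 1] by (simp add: qpoch_def)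
  have s: "a + b = B * x"
    using \<tau>z \<tau> unfolding a_def b_def x_def Q_def B_def by (simp add: field_simps)
  have "pab q \<beta> q n x = (\<Prod>i<n. w i) / qpoch B Q n * R n"
  proof (rule pab_eq_of_weighted_recurrence[OF Q_def B_def Q_def])
    show "qpoch B Q m \<noteq> 0" for m
      unfolding B_def Q_def by (rule qpoch_of_real_nonzero[OF q \<beta>])
    show "R 0 = 1"
      using phi32_terminating[OF Q(1), of 0] by (simp add: R_def)
    have "(1 - a * b) * R 1 = a * x - a * (a + b)"
      using phi32_al_salam_chihara_1[OF Q(1,2) z ab_1] by (simp add: R_def x_def)
    then have "w 0 * R 1 = x - (a + b)"
      using a by (simp add: w_def field_simps)
    then show "w 0 * R 1 = (1 - B) * x"
      by (simp add: s algebra_simps)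
  next
    fix m
    have "w m * w (Suc m) * R (Suc (Suc m))
        = w m / a * ((1 - a * b * Q ^ Suc m) * R (Suc (Suc m)))"
      by (simp add: w_def)
    also have "\<dots> = w m / a
        * (a * (x - (a + b) * Q ^ Suc m) * R (Suc m) - a ^ 2 * (1 - Q ^ Suc m) * R m)"
      unfolding R_def x_def
      by (rule arg_cong[OF phi32_al_salam_chihara_rec[OF Q(1) z ab_nz Q(3)]])
    also have "\<dots> = (1 - B * Q ^ Suc m) * x * w m * R (Suc m)
        - (1 - Q * Q ^ m) * (1 - Q * Q ^ Suc m) * R m"
      using a unfolding s by (simp add: w_def ab field_simps power2_eq_square)
    finally show "w m * w (Suc m) * R (Suc (Suc m))
        = (1 - B * Q ^ Suc m) * x * w m * R (Suc m)
          - (1 - Q * Q ^ m) * (1 - Q * Q ^ Suc m) * R m" .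
  qed
  moreover have "(\<Prod>i<n. w i) = qpoch (a * b) Q n / a ^ n"
    by (simp add: w_def prod_dividef qpoch_def)
  ultimately show ?thesis
    unfolding R_def ab by (simp add: x_def Q_def B_def a_def power_mult_distrib)
qed

theorem proposition2p18:
  fixes q \<beta> :: real and n :: nat and z \<tau> :: complex
  assumes "0 < q" "q < 1" "\<beta> < 1" "z \<noteq> 0" "\<tau> \<noteq> 0"
    and "of_real q * (\<tau> + inverse \<tau>) = of_real \<beta> * (z + inverse z)"
  shows "(pab q \<beta> q n (z + inverse z) =
           qpoch (of_real q) (of_real q) n / qpoch (of_real \<beta>) (of_real q) n *
           (\<Sum>k\<le>n. qpoch (of_real q * \<tau> / z) (of_real q) k
                     * qpoch (of_real q * z / \<tau>) (of_real q) (n - k)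
                     / (qpoch (of_real q) (of_real q) k * qpoch (of_real q) (of_real q) (n - k))
                     * z powi (2 * int k - int n))) \<and>
         ((\<forall>k\<le>n. qpoch (inverse (of_real q ^ n) * \<tau> / z) (of_real q) k \<noteq> 0) \<longrightarrow>
         pab q \<beta> q n (z + inverse z) =
           qpoch (of_real q * z / \<tau>) (of_real q) n / (z ^ n * qpoch (of_real \<beta>) (of_real q) n) *
           phi21 (inverse (of_real q ^ n)) (of_real q * \<tau> / z) (inverse (of_real q ^ n) * \<tau> / z)
                 (of_real q) (\<tau> * z)) \<and>
         pab q \<beta> q n (z + inverse z) =
           qpoch (of_real q ^ 2) (of_real q) n / (of_real q ^ n * \<tau> ^ n * qpoch (of_real \<beta>) (of_real q) n) *
           phi32 (inverse (of_real q ^ n)) (of_real q * \<tau> / z) (of_real q * \<tau> * z) (of_real q ^ 2) 0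
                 (of_real q) (of_real q)"
  using pab_eq_qbinomial_convolution[OF assms] pab_eq_phi21[OF assms] pab_eq_phi32[OF assms]
  unfolding qbinomial_convolution_def by blast

end
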